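(* Let $m\ge1$, $\lambda=(\lambda_1,\dots,\lambda_m)$ with nonzero real $\lambda_j$, and let $\mathfrak{g}_m(\lambda)$ be the oscillator algebra with basis $P,X_1,\dots,X_m,Y_1,\dots,Y_m,Q$ and the only nonzero brackets $[X_i,Y_j]=\delta_{ij}P$, $[Q,X_j]=\lambda_jY_j$, $[Q,Y_j]=-\lambda_jX_j$; let $G_m(\lambda)$ be the corresponding simply connected oscillator group. For $\varepsilon\in\mathbb{R}$ let $g_\varepsilon$ be the left-invariant metric with $g_\varepsilon(P,P)=g_\varepsilon(Q,Q)=\varepsilon$, $g_\varepsilon(P,Q)=1$, $g_\varepsilon(X_i,X_j)=g_\varepsilon(Y_i,Y_j)=\delta_{ij}$, and all other pairings of basis vectors zero. Every derivation $D$ of $\mathfrak{g}_m(\lambda)$ is written as $DP=\alpha P$, $DX_j=a_jP+\sum_l b^l_jX_l+\sum_l c^l_jY_l$, $DY_j=\tilde a_jP+\sum_l B^l_jX_l+\sum_l C^l_jY_l$, $DQ=\mu P-\sum_l\lambda_la_lX_l-\sum_l\lambda_l\tilde a_lY_l$ with real coefficients. Suppose $g_\varepsilon$ satisfies the solvsoliton equation $\mathrm{ric}=c\,\mathrm{Id}+D$ for some $c\in\mathbb{R}$ and some derivation $D$ of $\mathfrak{g}_m(\lambda)$. Then $\varepsilon=c=0$, $\mu=m/2$, and $\alpha=a_j=\tilde a_j=b^i_j=c^i_j=0$ for all $i,j$. Consequently the left-invariant Lorentzian metric $g_0$ is a steady solvsoliton (i.e. a solvsoliton with $c=0$).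
   Context: $\mathrm{ric}$ is the Ricci operator of $g_\varepsilon$, defined by $g_\varepsilon(\mathrm{ric}X,Y)=\mathrm{Ric}(X,Y)$. A left-invariant pseudo-Riemannian metric on a simply connected solvable Lie group is a solvsoliton if $\mathrm{ric}=c\,\mathrm{Id}+D$ for some $c\in\mathbb{R}$ and some derivation $D$ of the Lie algebra; it is called steady if $c=0$. *)

theory Defs
  imports Complex_Main
begin

text \<open>A Lie algebra is given by a finite index set I of basis vectors, and structure
constants br a b k (the e_k-coefficient of [e_a, e_b]).  Vectors are coefficient
functions supported on I.  A left-invariant metric is given by its Gram matrix G
on the basis.\<close>

definition supp_in :: "'i set \<Rightarrow> ('i \<Rightarrow> real) \<Rightarrow> bool" where
  "supp_in I v \<longleftrightarrow> (\<forall>k. k \<notin> I \<longrightarrow> v k = 0)"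

definition bvec :: "'i \<Rightarrow> 'i \<Rightarrow> real" where
  "bvec a = (\<lambda>k. if k = a then 1 else 0)"

definition vbr :: "'i set \<Rightarrow> ('i \<Rightarrow> 'i \<Rightarrow> 'i \<Rightarrow> real)
    \<Rightarrow> ('i \<Rightarrow> real) \<Rightarrow> ('i \<Rightarrow> real) \<Rightarrow> 'i \<Rightarrow> real" where
  "vbr I br u v = (\<lambda>k. \<Sum>a\<in>I. \<Sum>b\<in>I. u a * v b * br a b k)"

definition ip :: "'i set \<Rightarrow> ('i \<Rightarrow> 'i \<Rightarrow> real) \<Rightarrow> ('i \<Rightarrow> real) \<Rightarrow> ('i \<Rightarrow> real) \<Rightarrow> real" where
  "ip I G u v = (\<Sum>a\<in>I. \<Sum>b\<in>I. u a * v b * G a b)"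

definition nondegenerate :: "'i set \<Rightarrow> ('i \<Rightarrow> 'i \<Rightarrow> real) \<Rightarrow> bool" where
  "nondegenerate I G \<longleftrightarrow>
     (\<forall>u. supp_in I u \<longrightarrow> (\<forall>z. supp_in I z \<longrightarrow> ip I G u z = 0) \<longrightarrow> u = (\<lambda>_. 0))"

text \<open>Levi-Civita connection of a left-invariant metric, via the Koszul formula
  2 g(nabla_u v, z) = g([u,v],z) - g([v,z],u) + g([z,u],v).\<close>

definition lc_conn :: "'i set \<Rightarrow> ('i \<Rightarrow> 'i \<Rightarrow> 'i \<Rightarrow> real) \<Rightarrow> ('i \<Rightarrow> 'i \<Rightarrow> real)
    \<Rightarrow> ('i \<Rightarrow> real) \<Rightarrow> ('i \<Rightarrow> real) \<Rightarrow> 'i \<Rightarrow> real" where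
  "lc_conn I br G u v = (THE w. supp_in I w \<and>
     (\<forall>z. supp_in I z \<longrightarrow> ip I G w z =
        (ip I G (vbr I br u v) z - ip I G (vbr I br v z) u + ip I G (vbr I br z u) v) / 2))"

definition curv :: "'i set \<Rightarrow> ('i \<Rightarrow> 'i \<Rightarrow> 'i \<Rightarrow> real) \<Rightarrow> ('i \<Rightarrow> 'i \<Rightarrow> real)
    \<Rightarrow> ('i \<Rightarrow> real) \<Rightarrow> ('i \<Rightarrow> real) \<Rightarrow> ('i \<Rightarrow> real) \<Rightarrow> 'i \<Rightarrow> real" where
  "curv I br G u v w = (\<lambda>k. lc_conn I br G u (lc_conn I br G v w) k
      - lc_conn I br G v (lc_conn I br G u w) k
      - lc_conn I br G (vbr I br u v) w k)"

definition Ric :: "'i set \<Rightarrow> ('i \<Rightarrow> 'i \<Rightarrow> 'i \<Rightarrow> real) \<Rightarrow> ('i \<Rightarrow> 'i \<Rightarrow> real)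
    \<Rightarrow> ('i \<Rightarrow> real) \<Rightarrow> ('i \<Rightarrow> real) \<Rightarrow> real" where
  "Ric I br G v w = (\<Sum>a\<in>I. curv I br G (bvec a) v w a)"

definition ric_op :: "'i set \<Rightarrow> ('i \<Rightarrow> 'i \<Rightarrow> 'i \<Rightarrow> real) \<Rightarrow> ('i \<Rightarrow> 'i \<Rightarrow> real)
    \<Rightarrow> ('i \<Rightarrow> real) \<Rightarrow> 'i \<Rightarrow> real" where
  "ric_op I br G v = (THE w. supp_in I w \<and>
     (\<forall>z. supp_in I z \<longrightarrow> ip I G w z = Ric I br G v z))"

text \<open>Linear maps are given by matrices on the basis: D k a is the e_k-coefficient of D(e_a).
  D is a derivation iff D[e_a,e_b] = [D e_a, e_b] + [e_a, D e_b] for all basis vectors.\<close>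

definition is_derivation :: "'i set \<Rightarrow> ('i \<Rightarrow> 'i \<Rightarrow> 'i \<Rightarrow> real) \<Rightarrow> ('i \<Rightarrow> 'i \<Rightarrow> real) \<Rightarrow> bool" where
  "is_derivation I br D \<longleftrightarrow> (\<forall>a\<in>I. \<forall>b\<in>I. \<forall>k\<in>I.
     (\<Sum>j\<in>I. D k j * br a b j) = (\<Sum>j\<in>I. D j a * br j b k) + (\<Sum>j\<in>I. D j b * br a j k))"

definition solvsoliton_eq :: "'i set \<Rightarrow> ('i \<Rightarrow> 'i \<Rightarrow> 'i \<Rightarrow> real) \<Rightarrow> ('i \<Rightarrow> 'i \<Rightarrow> real)
    \<Rightarrow> real \<Rightarrow> ('i \<Rightarrow> 'i \<Rightarrow> real) \<Rightarrow> bool" where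
  "solvsoliton_eq I br G c D \<longleftrightarrow> is_derivation I br D \<and>
     (\<forall>a\<in>I. \<forall>k\<in>I. ric_op I br G (bvec a) k = c * bvec a k + D k a)"

datatype osc_idx = P | X nat | Y nat | Q

definition osc_basis :: "nat \<Rightarrow> osc_idx set" where
  "osc_basis m = {P, Q} \<union> X ` {1..m} \<union> Y ` {1..m}"

fun osc_br :: "(nat \<Rightarrow> real) \<Rightarrow> osc_idx \<Rightarrow> osc_idx \<Rightarrow> osc_idx \<Rightarrow> real" where
  "osc_br lam (X i) (Y j) k = (if i = j \<and> k = P then 1 else 0)"
| "osc_br lam (Y j) (X i) k = (if i = j \<and> k = P then -1 else 0)"
| "osc_br lam Q (X j) k = (if k = Y j then lam j else 0)"
| "osc_br lam (X j) Q k = (if k = Y j then - lam j else 0)"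
| "osc_br lam Q (Y j) k = (if k = X j then - lam j else 0)"
| "osc_br lam (Y j) Q k = (if k = X j then lam j else 0)"
| "osc_br lam _ _ k = 0"

fun osc_metric :: "real \<Rightarrow> osc_idx \<Rightarrow> osc_idx \<Rightarrow> real" where
  "osc_metric eps P P = eps"
| "osc_metric eps Q Q = eps"
| "osc_metric eps P Q = 1"
| "osc_metric eps Q P = 1"
| "osc_metric eps (X i) (X j) = (if i = j then 1 else 0)"
| "osc_metric eps (Y i) (Y j) = (if i = j then 1 else 0)"
| "osc_metric eps _ _ = 0"

end

theory Submission
  imports Defs
begin

text \<open>The Koszul formula on the basis determines the Christoffel symbols of g_eps explicitly,
  and from them the Ricci operator: ric P = (m eps/2) P, ric Q = (m/2) P,
  ric X_j = -(eps/2) X_j and ric Y_j = -(eps/2) Y_j.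
  The derivation rule applied to [X_1,Y_1] = P and [Q,X_1] = lam_1 Y_1 gives the diagonal relations
  D_PP = D_XX + D_YY and D_YY = D_QQ + D_XX.  Inserting the diagonal of ric = c Id + D into them
  yields first c = 0 and then (m + 2) eps = 0; the remaining entries of D are read off.\<close>

definition bracket_form :: "'i set \<Rightarrow> ('i \<Rightarrow> 'i \<Rightarrow> 'i \<Rightarrow> real) \<Rightarrow> ('i \<Rightarrow> 'i \<Rightarrow> real)
    \<Rightarrow> 'i \<Rightarrow> 'i \<Rightarrow> 'i \<Rightarrow> real" where
  "bracket_form I br G a b c = (\<Sum>k\<in>I. br a b k * G k c)"

text \<open>Gm a b k is the e_k-coefficient of nabla_{e_a} e_b; the second clause is the Koszul
  formula evaluated on basis vectors.\<close>

definition christoffel_symbols :: "'i set \<Rightarrow> ('i \<Rightarrow> 'i \<Rightarrow> 'i \<Rightarrow> real) \<Rightarrow> ('i \<Rightarrow> 'i \<Rightarrow> real)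
    \<Rightarrow> ('i \<Rightarrow> 'i \<Rightarrow> 'i \<Rightarrow> real) \<Rightarrow> bool" where
  "christoffel_symbols I br G Gm \<longleftrightarrow> (\<forall>a\<in>I. \<forall>b\<in>I. supp_in I (Gm a b)) \<and>
     (\<forall>a\<in>I. \<forall>b\<in>I. \<forall>c\<in>I. bracket_form I Gm G a b c =
        (bracket_form I br G a b c - bracket_form I br G b c a + bracket_form I br G c a b) / 2)"

lemma ip_diff_left: "ip I G (\<lambda>k. x k - y k) z = ip I G x z - ip I G y z"
  unfolding ip_def by (simp add: algebra_simps sum_subtractf)

lemma nondegenerate_the_eq:
  assumes nd: "nondegenerate I G" and w: "supp_in I w"
    and h: "\<forall>z. supp_in I z \<longrightarrow> ip I G w z = F z"
  shows "(THE w. supp_in I w \<and> (\<forall>z. supp_in I z \<longrightarrow> ip I G w z = F z)) = w"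
proof (rule the_equality)
  show "supp_in I w \<and> (\<forall>z. supp_in I z \<longrightarrow> ip I G w z = F z)" using w h by blast
next
  fix w' assume w': "supp_in I w' \<and> (\<forall>z. supp_in I z \<longrightarrow> ip I G w' z = F z)"
  have "supp_in I (\<lambda>k. w' k - w k)" using w' w by (simp add: supp_in_def)
  moreover have "\<forall>z. supp_in I z \<longrightarrow> ip I G (\<lambda>k. w' k - w k) z = 0"
    using w' h by (simp add: ip_diff_left)
  ultimately have "(\<lambda>k. w' k - w k) = (\<lambda>_. 0)" using nd unfolding nondegenerate_def by blast
  then show "w' = w" by (simp add: fun_eq_iff)
qed

lemma ip_vbr_eq_bracket_form:
  "ip I G (vbr I br u v) z = (\<Sum>a\<in>I. \<Sum>b\<in>I. \<Sum>c\<in>I. u a * v b * z c * bracket_form I br G a b c)"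
proof -
  have "ip I G (vbr I br u v) z =
      (\<Sum>k\<in>I. \<Sum>c\<in>I. \<Sum>a\<in>I. \<Sum>b\<in>I. u a * v b * z c * (br a b k * G k c))"
    unfolding ip_def vbr_def by (simp add: sum_distrib_left sum_distrib_right mult_ac)
  also have "\<dots> = (\<Sum>c\<in>I. \<Sum>k\<in>I. \<Sum>a\<in>I. \<Sum>b\<in>I. u a * v b * z c * (br a b k * G k c))"
    by (rule sum.swap)
  also have "\<dots> = (\<Sum>c\<in>I. \<Sum>a\<in>I. \<Sum>k\<in>I. \<Sum>b\<in>I. u a * v b * z c * (br a b k * G k c))"
    by (rule sum.cong[OF refl], rule sum.swap)
  also have "\<dots> = (\<Sum>c\<in>I. \<Sum>a\<in>I. \<Sum>b\<in>I. \<Sum>k\<in>I. u a * v b * z c * (br a b k * G k c))"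
    by (rule sum.cong[OF refl], rule sum.cong[OF refl], rule sum.swap)
  also have "\<dots> = (\<Sum>a\<in>I. \<Sum>b\<in>I. \<Sum>c\<in>I. \<Sum>k\<in>I. u a * v b * z c * (br a b k * G k c))"
    by (subst sum.swap, rule sum.cong[OF refl], rule sum.swap)
  finally show ?thesis unfolding bracket_form_def sum_distrib_left by simp
qed

lemma sum3_rotate:
  fixes u v z :: "'i \<Rightarrow> real"
  shows "(\<Sum>a\<in>I. \<Sum>b\<in>I. \<Sum>c\<in>I. v a * z b * u c * t a b c)
       = (\<Sum>a\<in>I. \<Sum>b\<in>I. \<Sum>c\<in>I. u a * v b * z c * t b c a)"
proof -
  have "(\<Sum>a\<in>I. \<Sum>b\<in>I. \<Sum>c\<in>I. v a * z b * u c * t a b c)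
      = (\<Sum>c\<in>I. \<Sum>a\<in>I. \<Sum>b\<in>I. v a * z b * u c * t a b c)"
    by (subst sum.swap, rule sum.cong[OF refl], rule sum.swap)
  then show ?thesis by (simp add: mult_ac)
qed

lemma lc_conn_eq_vbr:
  assumes nd: "nondegenerate I G" and Gm: "christoffel_symbols I br G Gm"
  shows "lc_conn I br G u v = vbr I Gm u v"
  unfolding lc_conn_def
proof (rule nondegenerate_the_eq[OF nd], goal_cases supp koszul)
  case supp
  show ?case using Gm unfolding christoffel_symbols_def supp_in_def vbr_def by simp
next
  case koszul
  have kz: "bracket_form I Gm G a b c =
      (bracket_form I br G a b c - bracket_form I br G b c a + bracket_form I br G c a b) / 2"
    if "a \<in> I" "b \<in> I" "c \<in> I" for a b c
    using Gm that unfolding christoffel_symbols_def by blast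
  show ?case
  proof (intro allI impI)
    fix z
    let ?T = "\<lambda>x y w a b c. x a * y b * w c * bracket_form I br G a b c"
    have "ip I G (vbr I Gm u v) z = (\<Sum>a\<in>I. \<Sum>b\<in>I. \<Sum>c\<in>I. (?T u v z a b c
        - u a * v b * z c * bracket_form I br G b c a + u a * v b * z c * bracket_form I br G c a b) / 2)"
      unfolding ip_vbr_eq_bracket_form
      by (intro sum.cong refl) (simp only: kz, simp add: algebra_simps)
    also have "\<dots> = ((\<Sum>a\<in>I. \<Sum>b\<in>I. \<Sum>c\<in>I. ?T u v z a b c)
        - (\<Sum>a\<in>I. \<Sum>b\<in>I. \<Sum>c\<in>I. ?T v z u a b c) + (\<Sum>a\<in>I. \<Sum>b\<in>I. \<Sum>c\<in>I. ?T z u v a b c)) / 2"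
      unfolding sum3_rotate[of v z u] sum3_rotate[of z u v]
      by (simp only: sum_divide_distrib[symmetric] sum_subtractf sum.distrib)
    finally show "ip I G (vbr I Gm u v) z =
        (ip I G (vbr I br u v) z - ip I G (vbr I br v z) u + ip I G (vbr I br z u) v) / 2"
      by (simp only: ip_vbr_eq_bracket_form)
  qed
qed

lemma mult_if_zero [simp]:
  "(a::real) * (if p then b else 0) = (if p then a * b else 0)"
  "(if p then b else 0) * (a::real) = (if p then b * a else 0)"
  by simp_all

lemma vbr_expand_right:
  assumes "finite I"
  shows "vbr I B x z k = (\<Sum>d\<in>I. z d * vbr I B x (bvec d) k)"
proof -
  have "(\<Sum>d\<in>I. z d * vbr I B x (bvec d) k) = (\<Sum>d\<in>I. \<Sum>a\<in>I. z d * x a * B a d k)"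
    unfolding vbr_def
    by (intro sum.cong refl) (simp add: sum_distrib_left bvec_def assms mult_ac cong: if_cong)
  also have "\<dots> = (\<Sum>a\<in>I. \<Sum>d\<in>I. z d * x a * B a d k)" by (rule sum.swap)
  finally show ?thesis unfolding vbr_def by (simp add: mult_ac)
qed

lemma vbr_sum_right:
  "vbr I B u (\<lambda>k. \<Sum>d\<in>I. z d * W d k) k = (\<Sum>d\<in>I. z d * vbr I B u (W d) k)"
proof -
  have "vbr I B u (\<lambda>k. \<Sum>d\<in>I. z d * W d k) k
      = (\<Sum>a\<in>I. \<Sum>b\<in>I. \<Sum>d\<in>I. z d * (u a * W d b * B a b k))"
    unfolding vbr_def by (simp add: sum_distrib_left sum_distrib_right mult_ac)
  also have "\<dots> = (\<Sum>a\<in>I. \<Sum>d\<in>I. \<Sum>b\<in>I. z d * (u a * W d b * B a b k))"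
    by (rule sum.cong[OF refl], rule sum.swap)
  also have "\<dots> = (\<Sum>d\<in>I. \<Sum>a\<in>I. \<Sum>b\<in>I. z d * (u a * W d b * B a b k))" by (rule sum.swap)
  finally show ?thesis unfolding vbr_def by (simp add: sum_distrib_left)
qed

lemma ip_expand_right:
  assumes "finite I"
  shows "ip I G w z = (\<Sum>d\<in>I. z d * ip I G w (bvec d))"
proof -
  have "(\<Sum>d\<in>I. z d * ip I G w (bvec d)) = (\<Sum>d\<in>I. \<Sum>a\<in>I. w a * z d * G a d)"
    unfolding ip_def
    by (intro sum.cong refl) (simp add: sum_distrib_left bvec_def assms mult_ac cong: if_cong)
  also have "\<dots> = (\<Sum>a\<in>I. \<Sum>d\<in>I. w a * z d * G a d)" by (rule sum.swap)
  finally show ?thesis unfolding ip_def by simp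
qed

lemma vbr_bvec_left: "finite I \<Longrightarrow> a \<in> I \<Longrightarrow> vbr I B (bvec a) w k = (\<Sum>b\<in>I. w b * B a b k)"
  unfolding vbr_def bvec_def by (subst sum.swap) (simp add: sum.delta cong: if_cong)

lemma vbr_bvec_right: "finite I \<Longrightarrow> b \<in> I \<Longrightarrow> vbr I B x (bvec b) k = (\<Sum>a\<in>I. x a * B a b k)"
  unfolding vbr_def bvec_def by (simp add: sum.delta cong: if_cong)

lemma vbr_bvec_bvec: "finite I \<Longrightarrow> a \<in> I \<Longrightarrow> b \<in> I \<Longrightarrow> vbr I B (bvec a) (bvec b) = B a b"
  by (rule ext) (simp add: vbr_bvec_left, simp add: bvec_def sum.delta)

context
  fixes I :: "'i set" and br Gm :: "'i \<Rightarrow> 'i \<Rightarrow> 'i \<Rightarrow> real" and G :: "'i \<Rightarrow> 'i \<Rightarrow> real"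
  assumes finite: "finite I"
    and lc: "\<And>u v. lc_conn I br G u v = vbr I Gm u v"
begin

lemma curv_expand_right: "curv I br G x y z k = (\<Sum>d\<in>I. z d * curv I br G x y (bvec d) k)"
proof -
  have expand: "vbr I Gm y z = (\<lambda>k. \<Sum>d\<in>I. z d * vbr I Gm y (bvec d) k)" for y
    by (rule ext, rule vbr_expand_right[OF finite])
  show ?thesis
    unfolding curv_def lc expand vbr_sum_right by (simp add: sum_subtractf sum.distrib algebra_simps)
qed

lemma Ric_expand_right: "Ric I br G v z = (\<Sum>d\<in>I. z d * Ric I br G v (bvec d))"
proof -
  have "Ric I br G v z = (\<Sum>a\<in>I. \<Sum>d\<in>I. z d * curv I br G (bvec a) v (bvec d) a)"
    unfolding Ric_def by (subst curv_expand_right) simp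
  also have "\<dots> = (\<Sum>d\<in>I. \<Sum>a\<in>I. z d * curv I br G (bvec a) v (bvec d) a)" by (rule sum.swap)
  finally show ?thesis unfolding Ric_def by (simp add: sum_distrib_left)
qed

lemma ric_op_eqI:
  assumes nd: "nondegenerate I G" and w: "supp_in I w"
    and h: "\<forall>d\<in>I. ip I G w (bvec d) = Ric I br G v (bvec d)"
  shows "ric_op I br G v = w"
  unfolding ric_op_def
proof (rule nondegenerate_the_eq[OF nd w], intro allI impI)
  fix z
  show "ip I G w z = Ric I br G v z"
    unfolding ip_expand_right[OF finite, of G w z] Ric_expand_right[of v z] using h by simp
qed

lemma Ric_bvec_bvec:
  assumes "v \<in> I" "c \<in> I"
  shows "Ric I br G (bvec v) (bvec c) = (\<Sum>a\<in>I. (\<Sum>b\<in>I. Gm v c b * Gm a b a)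
      - (\<Sum>b\<in>I. Gm a c b * Gm v b a) - (\<Sum>x\<in>I. br a v x * Gm x c a))"
  unfolding Ric_def curv_def lc
  by (intro sum.cong refl) (simp add: vbr_bvec_bvec vbr_bvec_left vbr_bvec_right finite assms)

end

lemma finite_osc_basis [simp]: "finite (osc_basis m)"
  unfolding osc_basis_def by simp

lemma mem_osc_basis [simp]:
  "P \<in> osc_basis m" "Q \<in> osc_basis m"
  "X i \<in> osc_basis m \<longleftrightarrow> 1 \<le> i \<and> i \<le> m" "Y i \<in> osc_basis m \<longleftrightarrow> 1 \<le> i \<and> i \<le> m"
  unfolding osc_basis_def by auto

lemma sum_osc_basis:
  "sum f (osc_basis m) = f P + f Q + (\<Sum>i=1..m. f (X i)) + (\<Sum>i=1..m. f (Y i))"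
proof -
  have "sum f (X ` {1..m} \<union> Y ` {1..m}) = sum f (X ` {1..m}) + sum f (Y ` {1..m})"
    by (rule sum.union_disjoint) auto
  also have "\<dots> = (\<Sum>i=1..m. f (X i)) + (\<Sum>i=1..m. f (Y i))"
    by (simp add: sum.reindex inj_on_def)
  finally have XY: "sum f (X ` {1..m} \<union> Y ` {1..m}) = (\<Sum>i=1..m. f (X i)) + (\<Sum>i=1..m. f (Y i))" .
  have "osc_basis m = insert P (insert Q (X ` {1..m} \<union> Y ` {1..m}))"
    unfolding osc_basis_def by auto
  then have "sum f (osc_basis m) = f P + (f Q + sum f (X ` {1..m} \<union> Y ` {1..m}))"
    by (simp add: image_iff)
  then show ?thesis using XY by (simp add: add_ac)
qed

text \<open>Congruence rule letting the simplifier use the bounds of the summation index.\<close>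

lemma sum_cong_atLeastAtMost:
  "a = a' \<Longrightarrow> b = b' \<Longrightarrow> (\<And>x. a' \<le> x \<Longrightarrow> x \<le> b' \<Longrightarrow> f x = g x) \<Longrightarrow>
    sum f {a..b} = sum g {a'..b'}"
  by (auto intro: sum.cong)

fun osc_christoffel :: "real \<Rightarrow> (nat \<Rightarrow> real) \<Rightarrow> osc_idx \<Rightarrow> osc_idx \<Rightarrow> osc_idx \<Rightarrow> real" where
  "osc_christoffel eps lam P (X j) k = (if k = Y j then - eps / 2 else 0)"
| "osc_christoffel eps lam P (Y j) k = (if k = X j then eps / 2 else 0)"
| "osc_christoffel eps lam (X j) P k = (if k = Y j then - eps / 2 else 0)"
| "osc_christoffel eps lam (Y j) P k = (if k = X j then eps / 2 else 0)"
| "osc_christoffel eps lam (X i) (Y j) k = (if i = j \<and> k = P then 1 / 2 else 0)"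
| "osc_christoffel eps lam (Y i) (X j) k = (if i = j \<and> k = P then - 1 / 2 else 0)"
| "osc_christoffel eps lam (X i) Q k = (if k = Y i then - 1 / 2 else 0)"
| "osc_christoffel eps lam Q (X i) k = (if k = Y i then lam i - 1 / 2 else 0)"
| "osc_christoffel eps lam (Y i) Q k = (if k = X i then 1 / 2 else 0)"
| "osc_christoffel eps lam Q (Y i) k = (if k = X i then 1 / 2 - lam i else 0)"
| "osc_christoffel eps lam _ _ k = 0"

definition osc_lower :: "real \<Rightarrow> (osc_idx \<Rightarrow> real) \<Rightarrow> osc_idx \<Rightarrow> real" where
  "osc_lower eps f c = (case c of P \<Rightarrow> eps * f P + f Q | Q \<Rightarrow> f P + eps * f Q
     | X i \<Rightarrow> f (X i) | Y i \<Rightarrow> f (Y i))"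

lemma sum_osc_metric:
  "c \<in> osc_basis m \<Longrightarrow> (\<Sum>d\<in>osc_basis m. f d * osc_metric eps d c) = osc_lower eps f c"
  unfolding osc_lower_def sum_osc_basis by (cases c) (auto simp: if_distrib cong: if_cong)

lemma christoffel_symbols_osc:
  "christoffel_symbols (osc_basis m) (osc_br lam) (osc_metric eps) (osc_christoffel eps lam)"
proof -
  have "osc_lower eps (osc_christoffel eps lam a b) c = (osc_lower eps (osc_br lam a b) c
      - osc_lower eps (osc_br lam b c) a + osc_lower eps (osc_br lam c a) b) / 2" for a b c
    by (cases a; cases b; cases c) (auto simp: osc_lower_def)
  moreover have "supp_in (osc_basis m) (osc_christoffel eps lam a b)"
    if "a \<in> osc_basis m" "b \<in> osc_basis m" for a b
    using that unfolding supp_in_def by (cases a; cases b) auto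
  ultimately show ?thesis
    unfolding christoffel_symbols_def bracket_form_def by (simp add: sum_osc_metric)
qed

definition osc_Ric :: "nat \<Rightarrow> real \<Rightarrow> osc_idx \<Rightarrow> osc_idx \<Rightarrow> real" where
  "osc_Ric m eps v c = (case (v, c) of
       (P, P) \<Rightarrow> m * eps\<^sup>2 / 2 | (P, Q) \<Rightarrow> m * eps / 2 | (Q, P) \<Rightarrow> m * eps / 2 | (Q, Q) \<Rightarrow> m / 2
     | (X i, X j) \<Rightarrow> (if i = j then - eps / 2 else 0)
     | (Y i, Y j) \<Rightarrow> (if i = j then - eps / 2 else 0)
     | _ \<Rightarrow> 0)"

lemma Ric_osc_bvec:
  assumes nd: "nondegenerate (osc_basis m) (osc_metric eps)"
    and v: "v \<in> osc_basis m" and c: "c \<in> osc_basis m"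
  shows "Ric (osc_basis m) (osc_br lam) (osc_metric eps) (bvec v) (bvec c) = osc_Ric m eps v c"
  unfolding Ric_bvec_bvec[OF finite_osc_basis lc_conn_eq_vbr[OF nd christoffel_symbols_osc] v c]
    osc_Ric_def using v c
  by (cases v; cases c) (simp_all add: sum_osc_basis power2_eq_square algebra_simps sum.distrib
      sum_subtractf sum_negf sum_distrib_left[symmetric] sum_divide_distrib[symmetric]
      cong: sum_cong_atLeastAtMost if_cong)

definition osc_ric :: "real \<Rightarrow> nat \<Rightarrow> osc_idx \<Rightarrow> osc_idx \<Rightarrow> real" where
  "osc_ric eps m v = (\<lambda>k. case v of
       P \<Rightarrow> (if k = P then m * eps / 2 else 0)
     | Q \<Rightarrow> (if k = P then m / 2 else 0)
     | X i \<Rightarrow> (if k = X i then - eps / 2 else 0)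
     | Y i \<Rightarrow> (if k = Y i then - eps / 2 else 0))"

lemma ric_op_osc:
  assumes nd: "nondegenerate (osc_basis m) (osc_metric eps)" and v: "v \<in> osc_basis m"
  shows "ric_op (osc_basis m) (osc_br lam) (osc_metric eps) (bvec v) = osc_ric eps m v"
proof (rule ric_op_eqI[OF finite_osc_basis lc_conn_eq_vbr[OF nd christoffel_symbols_osc] nd])
  show "supp_in (osc_basis m) (osc_ric eps m v)"
    unfolding supp_in_def osc_ric_def using v by (cases v) auto
  have "ip (osc_basis m) (osc_metric eps) (osc_ric eps m v) (bvec d) = osc_Ric m eps v d"
    if d: "d \<in> osc_basis m" for d
  proof -
    have "ip (osc_basis m) (osc_metric eps) (osc_ric eps m v) (bvec d)
        = (\<Sum>a\<in>osc_basis m. osc_ric eps m v a * osc_metric eps a d)"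
      unfolding ip_def using d by (intro sum.cong refl) (simp add: bvec_def sum.delta cong: if_cong)
    also have "\<dots> = osc_Ric m eps v d"
      unfolding sum_osc_metric[OF d] osc_lower_def osc_ric_def osc_Ric_def
      by (cases v; cases d) (simp_all add: power2_eq_square)
    finally show ?thesis .
  qed
  then show "\<forall>d\<in>osc_basis m. ip (osc_basis m) (osc_metric eps) (osc_ric eps m v) (bvec d)
      = Ric (osc_basis m) (osc_br lam) (osc_metric eps) (bvec v) (bvec d)"
    using Ric_osc_bvec[OF nd v] by simp
qed

lemma derivation_osc_PP:
  assumes der: "is_derivation (osc_basis m) (osc_br lam) D" and j: "j \<in> {1..m}"
  shows "D P P = D (X j) (X j) + D (Y j) (Y j)"
proof -
  have basis: "X j \<in> osc_basis m" "Y j \<in> osc_basis m" "P \<in> osc_basis m" using j by simp_all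
  have "(\<Sum>k\<in>osc_basis m. D P k * osc_br lam (X j) (Y j) k)
      = (\<Sum>k\<in>osc_basis m. D k (X j) * osc_br lam k (Y j) P)
      + (\<Sum>k\<in>osc_basis m. D k (Y j) * osc_br lam (X j) k P)"
    using der basis unfolding is_derivation_def by blast
  then show ?thesis
    using j by (simp add: sum_osc_basis cong: sum_cong_atLeastAtMost if_cong)
qed

lemma derivation_osc_YY:
  assumes der: "is_derivation (osc_basis m) (osc_br lam) D" and j: "j \<in> {1..m}"
    and lam: "lam j \<noteq> 0"
  shows "D (Y j) (Y j) = D Q Q + D (X j) (X j)"
proof -
  have basis: "Q \<in> osc_basis m" "X j \<in> osc_basis m" "Y j \<in> osc_basis m" using j by simp_all
  have "(\<Sum>k\<in>osc_basis m. D (Y j) k * osc_br lam Q (X j) k)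
      = (\<Sum>k\<in>osc_basis m. D k Q * osc_br lam k (X j) (Y j))
      + (\<Sum>k\<in>osc_basis m. D k (X j) * osc_br lam Q k (Y j))"
    using der basis unfolding is_derivation_def by blast
  then have "lam j * D (Y j) (Y j) = lam j * (D Q Q + D (X j) (X j))"
    using j by (simp add: sum_osc_basis algebra_simps cong: sum_cong_atLeastAtMost if_cong)
  then show ?thesis using lam by simp
qed

theorem mainTheorem3:
  fixes m :: nat and lam :: "nat \<Rightarrow> real" and eps c :: real
    and D :: "osc_idx \<Rightarrow> osc_idx \<Rightarrow> real"
  assumes "m \<ge> 1"
    and "\<forall>j\<in>{1..m}. lam j \<noteq> 0"
    and "nondegenerate (osc_basis m) (osc_metric eps)"
    and "solvsoliton_eq (osc_basis m) (osc_br lam) (osc_metric eps) c D"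
  shows "eps = 0 \<and> c = 0 \<and> D P Q = real m / 2 \<and> D P P = 0
    \<and> (\<forall>j\<in>{1..m}. D P (X j) = 0 \<and> D P (Y j) = 0)
    \<and> (\<forall>i\<in>{1..m}. \<forall>j\<in>{1..m}. D (X i) (X j) = 0 \<and> D (Y i) (X j) = 0)
    \<and> solvsoliton_eq (osc_basis m) (osc_br lam) (osc_metric 0) 0 D"
proof -
  have der: "is_derivation (osc_basis m) (osc_br lam) D" using assms(4) by (simp add: solvsoliton_eq_def)
  have sol: "osc_ric eps m a k = c * bvec a k + D k a"
    if "a \<in> osc_basis m" "k \<in> osc_basis m" for a k
  proof -
    have "ric_op (osc_basis m) (osc_br lam) (osc_metric eps) (bvec a) k = c * bvec a k + D k a"
      using assms(4) that unfolding solvsoliton_eq_def by blast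
    then show ?thesis unfolding ric_op_osc[OF assms(3) that(1)] .
  qed
  have one: "1 \<in> {1..m}" using assms(1) by simp
  have "m * eps / 2 = c + D P P" "0 = c + D Q Q"
      "- eps / 2 = c + D (X 1) (X 1)" "- eps / 2 = c + D (Y 1) (Y 1)"
    using sol[of P P] sol[of Q Q] sol[of "X 1" "X 1"] sol[of "Y 1" "Y 1"] assms(1)
    by (simp_all add: osc_ric_def bvec_def)
  moreover note derivation_osc_PP[OF der one] derivation_osc_YY[OF der one assms(2)[rule_format, OF one]]
  ultimately have c0: "c = 0" and "(m + 2) * eps = 0"
    by (linarith, simp add: field_simps)
  then have e0: "eps = 0" by simp
  have "D P Q = real m / 2" "D P P = 0" using sol[of Q P] sol[of P P] c0 e0 by (simp_all add: osc_ric_def bvec_def)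
  moreover have "D P (X j) = 0 \<and> D P (Y j) = 0" if "j \<in> {1..m}" for j
    using sol[of "X j" P] sol[of "Y j" P] that by (simp add: osc_ric_def bvec_def)
  moreover have "D (X i) (X j) = 0 \<and> D (Y i) (X j) = 0" if "i \<in> {1..m}" "j \<in> {1..m}" for i j
    using sol[of "X j" "X i"] sol[of "X j" "Y i"] that c0 e0
    by (simp add: osc_ric_def bvec_def split: if_splits)
  ultimately show ?thesis using assms(4) c0 e0 by simp
qed

end
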